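(* Let $\Omega\subset\mathbb{R}^n$, $n\ge 2$, be a bounded, simply connected domain with smooth boundary. Let $\sigma_{bg},\sigma_a\in L^\infty(\Omega)$ be real conductivities with positive essential infimum, let $D\subset\Omega$ be the (measurable) region occupied by the anomalies, $D=\bigcup_j D_j$ with the $D_j$ connected and pairwise disjoint, and set $\sigma_D=\sigma_{bg}$ on $\Omega\setminus D$ and $\sigma_D=\sigma_a$ on $D$. Assume the well-separation condition: either $\sigma_a^M<\sigma_{bg}^m$ or $\sigma_a^m>\sigma_{bg}^M$. Then for every $g\in H^{-1/2}_{\diamond}(\partial\Omega)$, $$\langle(\Lambda_D-\Lambda_{bg})g,g\rangle=0 \iff \int_D\sigma_{bg}(x)\,|\nabla u_{bg}(x)|^2\,dx=0,$$ where $u_{bg}\in H^1_\diamond(\Omega)$ is the weak solution of $\nabla\cdot(\sigma_{bg}\nabla u_{bg})=0$ in $\Omega$, $\sigma_{bg}\partial_n u_{bg}=g$ on $\partial\Omega$.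
   Context: $H^1_\diamond(\Omega)=\{u\in H^1(\Omega):\int_{\partial\Omega}u=0\}$, $H^{\pm1/2}_\diamond(\partial\Omega)=\{u\in H^{\pm1/2}(\partial\Omega):\int_{\partial\Omega}u=0\}$. For a conductivity $\sigma\in L^\infty(\Omega)$ with positive essential infimum and $g\in H^{-1/2}_\diamond(\partial\Omega)$, the solution $u\in H^1_\diamond(\Omega)$ of $\nabla\cdot(\sigma\nabla u)=0$ in $\Omega$, $\sigma\partial_n u=g$ on $\partial\Omega$ is understood weakly: $\int_\Omega\sigma\nabla u\cdot\nabla\varphi\,dx=\int_{\partial\Omega}g\varphi\,dx$ for all $\varphi\in H^1_\diamond(\Omega)$. The Neumann-to-Dirichlet operator is $\Lambda_\sigma:H^{-1/2}_\diamond(\partial\Omega)\to H^{1/2}_\diamond(\partial\Omega)$, $g\mapsto u|_{\partial\Omega}$; $\Lambda_D=\Lambda_{\sigma_D}$, $\Lambda_{bg}=\Lambda_{\sigma_{bg}}$, and $\langle\cdot,\cdot\rangle$ is the duality pairing (the $L^2(\partial\Omega)$ inner product for $L^2$ data). Notation: $\sigma_{bg}^m=\operatorname{ess\,inf}_\Omega\sigma_{bg}$, $\sigma_{bg}^M=\operatorname{ess\,sup}_\Omega\sigma_{bg}$, $\sigma_a^m=\operatorname{ess\,inf}\sigma_a$, $\sigma_a^M=\operatorname{ess\,sup}\sigma_a$. *)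

theory Defs
  imports "HOL-Analysis.Analysis" "HOL-Probability.Essential_Supremum"
begin

definition partial :: "(real^'n \<Rightarrow> real) \<Rightarrow> 'n \<Rightarrow> real^'n \<Rightarrow> real" where
  "partial f i x = frechet_derivative f (at x) (axis i 1)"

coinductive smooth_fun :: "(real^'n \<Rightarrow> real) \<Rightarrow> bool" where
  "\<lbrakk> \<forall>x. f differentiable (at x); \<forall>i. smooth_fun (partial f i) \<rbrakk> \<Longrightarrow> smooth_fun f"

definition smooth_boundary :: "(real^'n) set \<Rightarrow> bool" where
  "smooth_boundary \<Omega> \<longleftrightarrow>
     (\<forall>p\<in>frontier \<Omega>. \<exists>r>0. \<exists>\<psi>. smooth_fun \<psi> \<and>
        (\<forall>x\<in>ball p r. x \<in> \<Omega> \<longleftrightarrow> \<psi> x < 0) \<and>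
        (\<forall>x\<in>ball p r. \<psi> x = 0 \<longrightarrow> frechet_derivative \<psi> (at x) \<noteq> (\<lambda>v. 0)))"

definition test_fun :: "(real^'n) set \<Rightarrow> (real^'n \<Rightarrow> real) \<Rightarrow> bool" where
  "test_fun \<Omega> \<phi> \<longleftrightarrow> smooth_fun \<phi> \<and> compact (closure {x. \<phi> x \<noteq> 0})
      \<and> closure {x. \<phi> x \<noteq> 0} \<subseteq> \<Omega>"

definition grad_of :: "(real^'n \<Rightarrow> real) \<Rightarrow> real^'n \<Rightarrow> real^'n" where
  "grad_of \<phi> x = (\<chi> i. partial \<phi> i x)"

definition L2_on :: "(real^'n) set \<Rightarrow> (real^'n \<Rightarrow> real) \<Rightarrow> bool" where
  "L2_on \<Omega> f \<longleftrightarrow> f \<in> borel_measurable (lebesgue_on \<Omega>) \<and>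
      integrable (lebesgue_on \<Omega>) (\<lambda>x. (f x)^2)"

definition has_weak_gradient :: "(real^'n) set \<Rightarrow> (real^'n \<Rightarrow> real) \<Rightarrow> (real^'n \<Rightarrow> real^'n) \<Rightarrow> bool" where
  "has_weak_gradient \<Omega> u w \<longleftrightarrow> L2_on \<Omega> u \<and> (\<forall>i. L2_on \<Omega> (\<lambda>x. w x $ i)) \<and>
     (\<forall>\<phi> i. test_fun \<Omega> \<phi> \<longrightarrow>
        integral\<^sup>L (lebesgue_on \<Omega>) (\<lambda>x. u x * partial \<phi> i x)
          = - integral\<^sup>L (lebesgue_on \<Omega>) (\<lambda>x. w x $ i * \<phi> x))"

definition H1 :: "(real^'n) set \<Rightarrow> (real^'n \<Rightarrow> real) \<Rightarrow> bool" where
  "H1 \<Omega> u \<longleftrightarrow> (\<exists>w. has_weak_gradient \<Omega> u w)"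

definition H1_norm :: "(real^'n) set \<Rightarrow> (real^'n \<Rightarrow> real) \<Rightarrow> (real^'n \<Rightarrow> real^'n) \<Rightarrow> real" where
  "H1_norm \<Omega> u w = sqrt (integral\<^sup>L (lebesgue_on \<Omega>) (\<lambda>x. (u x)^2)
                          + integral\<^sup>L (lebesgue_on \<Omega>) (\<lambda>x. (norm (w x))^2))"

definition H10 :: "(real^'n) set \<Rightarrow> (real^'n \<Rightarrow> real) \<Rightarrow> bool" where
  "H10 \<Omega> u \<longleftrightarrow> (\<exists>w \<phi>s. has_weak_gradient \<Omega> u w \<and> (\<forall>k. test_fun \<Omega> (\<phi>s k)) \<and>
      (\<lambda>k. H1_norm \<Omega> (\<lambda>x. u x - \<phi>s k x) (\<lambda>x. w x - grad_of (\<phi>s k) x)) \<longlonglongrightarrow> 0)"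

text \<open>Neumann datum g in H^{-1/2}_diamond(boundary), represented (via the trace
  isomorphism) by the functional G(phi) = <g, phi|boundary> on H1(Omega): a bounded
  linear functional on H1(Omega) vanishing on H1_0(Omega) and on constants.\<close>
definition neumann_datum :: "(real^'n) set \<Rightarrow> ((real^'n \<Rightarrow> real) \<Rightarrow> real) \<Rightarrow> bool" where
  "neumann_datum \<Omega> G \<longleftrightarrow>
     (\<forall>u v a b. H1 \<Omega> u \<and> H1 \<Omega> v \<longrightarrow> G (\<lambda>x. a * u x + b * v x) = a * G u + b * G v) \<and>
     (\<exists>C. \<forall>u w. has_weak_gradient \<Omega> u w \<longrightarrow> \<bar>G u\<bar> \<le> C * H1_norm \<Omega> u w) \<and>
     (\<forall>u. H10 \<Omega> u \<longrightarrow> G u = 0) \<and>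
     G (\<lambda>x. 1) = 0"

text \<open>Weak solution u (with weak gradient w) of div(sigma grad u) = 0, sigma d_n u = g.\<close>
definition weak_neumann_sol :: "(real^'n) set \<Rightarrow> (real^'n \<Rightarrow> real) \<Rightarrow> ((real^'n \<Rightarrow> real) \<Rightarrow> real)
    \<Rightarrow> (real^'n \<Rightarrow> real) \<Rightarrow> (real^'n \<Rightarrow> real^'n) \<Rightarrow> bool" where
  "weak_neumann_sol \<Omega> \<sigma> G u w \<longleftrightarrow> has_weak_gradient \<Omega> u w \<and>
     (\<forall>v z. has_weak_gradient \<Omega> v z \<longrightarrow>
        integral\<^sup>L (lebesgue_on \<Omega>) (\<lambda>x. \<sigma> x * (w x \<bullet> z x)) = G v)"

definition ess_sup_on :: "(real^'n) set \<Rightarrow> (real^'n \<Rightarrow> real) \<Rightarrow> ereal" where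
  "ess_sup_on \<Omega> f = esssup (lebesgue_on \<Omega>) (\<lambda>x. ereal (f x))"

definition ess_inf_on :: "(real^'n) set \<Rightarrow> (real^'n \<Rightarrow> real) \<Rightarrow> ereal" where
  "ess_inf_on \<Omega> f = - esssup (lebesgue_on \<Omega>) (\<lambda>x. - ereal (f x))"

definition conductivity :: "(real^'n) set \<Rightarrow> (real^'n \<Rightarrow> real) \<Rightarrow> bool" where
  "conductivity \<Omega> \<sigma> \<longleftrightarrow> \<sigma> \<in> borel_measurable (lebesgue_on \<Omega>) \<and>
     ess_sup_on \<Omega> \<sigma> < \<infinity> \<and> ess_inf_on \<Omega> \<sigma> > 0"

end

theory Submission
  imports Defs
begin

(*
  Testing the weak formulations of two Neumann problems with both solutions gives the
  monotonicity identity
    G u1 - G u2 = \<integral> \<sigma>1 |w1 - w2|^2 + \<integral> (\<sigma>2 - \<sigma>1) |w2|^2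
  for the gradients w1, w2, valid for any pair of bounded conductivities.  If \<sigma>a < \<sigma>bg
  apply it with (\<sigma>1, \<sigma>2) = (\<sigma>D, \<sigma>bg), if \<sigma>a > \<sigma>bg with the roles exchanged: in
  both cases the integrands are nonnegative, so a vanishing gap forces the background gradient
  to vanish a.e. on D (in the second case because it equals the gradient of uD there).
  Conversely, if it vanishes on D then \<sigma>D and \<sigma>bg agree wherever it is nonzero, and
  the mixed tested equations give G uD = G ubg directly.  Only the weak formulations and the
  essential bounds of the conductivities enter; of the geometry, openness of \<Omega> is used just
  to make \<Omega> Lebesgue measurable.
*)

definition L2_field :: "'a measure \<Rightarrow> ('a \<Rightarrow> 'v::euclidean_space) \<Rightarrow> bool" where
  "L2_field M p \<longleftrightarrow> p \<in> borel_measurable M \<and> integrable M (\<lambda>x. (norm (p x))\<^sup>2)"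

definition ess_bounded :: "'a measure \<Rightarrow> ('a \<Rightarrow> real) \<Rightarrow> bool" where
  "ess_bounded M \<sigma> \<longleftrightarrow> \<sigma> \<in> borel_measurable M \<and> (\<exists>C. AE x in M. \<bar>\<sigma> x\<bar> \<le> C)"

lemma ess_bounded_const: "ess_bounded M (\<lambda>x. c)"
  unfolding ess_bounded_def by auto

lemma ess_bounded_diff:
  assumes "ess_bounded M \<sigma>" and "ess_bounded M \<tau>"
  shows "ess_bounded M (\<lambda>x. \<sigma> x - \<tau> x)"
proof -
  obtain C D where "AE x in M. \<bar>\<sigma> x\<bar> \<le> C" and "AE x in M. \<bar>\<tau> x\<bar> \<le> D"
    using assms unfolding ess_bounded_def by blast
  then have "AE x in M. \<bar>\<sigma> x - \<tau> x\<bar> \<le> C + D" by eventually_elim auto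
  then show ?thesis using assms unfolding ess_bounded_def by auto
qed

lemma ess_bounded_if:
  assumes "ess_bounded M \<sigma>" and "ess_bounded M \<tau>" and [measurable]: "D \<in> sets M"
  shows "ess_bounded M (\<lambda>x. if x \<in> D then \<sigma> x else \<tau> x)"
proof -
  have [measurable]: "\<sigma> \<in> borel_measurable M" "\<tau> \<in> borel_measurable M"
    using assms unfolding ess_bounded_def by auto
  obtain C E where "AE x in M. \<bar>\<sigma> x\<bar> \<le> C" and "AE x in M. \<bar>\<tau> x\<bar> \<le> E"
    using assms unfolding ess_bounded_def by blast
  then have "AE x in M. \<bar>if x \<in> D then \<sigma> x else \<tau> x\<bar> \<le> max C E" by eventually_elim auto
  moreover have "(\<lambda>x. if x \<in> D then \<sigma> x else \<tau> x) \<in> borel_measurable M"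
    by measurable
  ultimately show ?thesis unfolding ess_bounded_def by blast
qed

lemma conductivity_AE_bounds:
  assumes "conductivity \<Omega> \<sigma>"
  obtains C where "AE x in lebesgue_on \<Omega>. 0 < \<sigma> x \<and> \<sigma> x \<le> C"
proof -
  let ?M = "lebesgue_on \<Omega>"
  let ?sup = "esssup ?M (\<lambda>x. ereal (\<sigma> x))" and ?neg_sup = "esssup ?M (\<lambda>x. - ereal (\<sigma> x))"
  have "?sup < \<infinity>" using assms unfolding conductivity_def ess_sup_on_def by simp
  then obtain C where C: "?sup \<le> ereal C"
    by (cases ?sup) auto
  have "0 < - ?neg_sup" using assms unfolding conductivity_def ess_inf_on_def by simp
  then have neg_sup: "?neg_sup < 0" using ereal_uminus_less_reorder by fastforce
  have "AE x in ?M. 0 < \<sigma> x \<and> \<sigma> x \<le> C"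
    using esssup_AE[of "\<lambda>x. ereal (\<sigma> x)" ?M] esssup_AE[of "\<lambda>x. - ereal (\<sigma> x)" ?M]
  proof eventually_elim
    case (elim x)
    have "ereal (\<sigma> x) \<le> ereal C" using elim(1) C by (rule order_trans)
    moreover have "- ereal (\<sigma> x) < 0" using elim(2) neg_sup by (rule order_le_less_trans)
    ultimately show ?case by simp
  qed
  then show thesis by (rule that)
qed

lemma conductivity_ess_bounded:
  assumes "conductivity \<Omega> \<sigma>"
  shows "ess_bounded (lebesgue_on \<Omega>) \<sigma>"
proof -
  obtain C where "AE x in lebesgue_on \<Omega>. 0 < \<sigma> x \<and> \<sigma> x \<le> C"
    using assms by (rule conductivity_AE_bounds)
  then have "AE x in lebesgue_on \<Omega>. \<bar>\<sigma> x\<bar> \<le> C" by eventually_elim auto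
  then show ?thesis using assms unfolding ess_bounded_def conductivity_def by auto
qed

lemma AE_less_if_ess_sup_less_ess_inf:
  assumes "ess_sup_on \<Omega> f < ess_inf_on \<Omega> g"
  shows "AE x in lebesgue_on \<Omega>. f x < g x"
  using esssup_AE[of "\<lambda>x. ereal (f x)" "lebesgue_on \<Omega>"]
    esssup_AE[of "\<lambda>x. - ereal (g x)" "lebesgue_on \<Omega>"]
proof eventually_elim
  case (elim x)
  have "ereal (f x) < - esssup (lebesgue_on \<Omega>) (\<lambda>x. - ereal (g x))"
    using elim(1) assms unfolding ess_sup_on_def ess_inf_on_def by (rule order_le_less_trans)
  also have "\<dots> \<le> ereal (g x)" using elim(2) by (simp add: ereal_uminus_le_reorder)
  finally show ?case by simp
qed

lemma integrable_weighted_inner: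
  fixes p q :: "'a \<Rightarrow> 'v::euclidean_space"
  assumes p: "L2_field M p" and q: "L2_field M q" and \<sigma>: "ess_bounded M \<sigma>"
  shows "integrable M (\<lambda>x. \<sigma> x * (p x \<bullet> q x))"
proof -
  obtain C where C: "AE x in M. \<bar>\<sigma> x\<bar> \<le> C" using \<sigma> unfolding ess_bounded_def by blast
  have [measurable]: "p \<in> borel_measurable M" "q \<in> borel_measurable M" "\<sigma> \<in> borel_measurable M"
    using p q \<sigma> unfolding L2_field_def ess_bounded_def by auto
  have inner_le: "\<bar>p x \<bullet> q x\<bar> \<le> (norm (p x))\<^sup>2 + (norm (q x))\<^sup>2" for x
  proof -
    have "2 * (norm (p x) * norm (q x)) \<le> (norm (p x))\<^sup>2 + (norm (q x))\<^sup>2"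
      using sum_squares_bound[of "norm (p x)" "norm (q x)"] by simp
    then show ?thesis
      using Cauchy_Schwarz_ineq2[of "p x" "q x"] mult_nonneg_nonneg[of "norm (p x)" "norm (q x)"]
      by simp
  qed
  show ?thesis
  proof (rule Bochner_Integration.integrable_bound)
    show "integrable M (\<lambda>x. \<bar>C\<bar> * ((norm (p x))\<^sup>2 + (norm (q x))\<^sup>2))"
      using p q unfolding L2_field_def by auto
    show "AE x in M. norm (\<sigma> x * (p x \<bullet> q x)) \<le> norm (\<bar>C\<bar> * ((norm (p x))\<^sup>2 + (norm (q x))\<^sup>2))"
      using C
    proof eventually_elim
      case (elim x)
      then have "\<bar>\<sigma> x\<bar> * \<bar>p x \<bullet> q x\<bar> \<le> \<bar>C\<bar> * ((norm (p x))\<^sup>2 + (norm (q x))\<^sup>2)"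
        using inner_le[of x] by (intro mult_mono) auto
      then show ?case by (simp add: abs_mult)
    qed
  qed measurable
qed

lemma L2_field_diff:
  fixes p q :: "'a \<Rightarrow> 'v::euclidean_space"
  assumes p: "L2_field M p" and q: "L2_field M q"
  shows "L2_field M (\<lambda>x. p x - q x)"
proof -
  have "(norm (p x - q x))\<^sup>2 = (norm (p x))\<^sup>2 - 2 * (p x \<bullet> q x) + (norm (q x))\<^sup>2" for x
    by (simp add: power2_norm_eq_inner inner_diff inner_commute)
  moreover have "integrable M (\<lambda>x. p x \<bullet> q x)"
    using integrable_weighted_inner[OF p q ess_bounded_const[of M 1]] by simp
  ultimately show ?thesis using p q unfolding L2_field_def by auto
qed

lemma has_weak_gradient_L2_field:
  assumes "has_weak_gradient \<Omega> u w"
  shows "L2_field (lebesgue_on \<Omega>) w"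
proof -
  have L2: "\<And>i. (\<lambda>x. w x $ i) \<in> borel_measurable (lebesgue_on \<Omega>)"
    "\<And>i. integrable (lebesgue_on \<Omega>) (\<lambda>x. (w x $ i)\<^sup>2)"
    using assms unfolding has_weak_gradient_def L2_on_def by auto
  have "(norm (w x))\<^sup>2 = (\<Sum>i\<in>UNIV. (w x $ i)\<^sup>2)" for x
    unfolding power2_norm_eq_inner by (simp add: inner_vec_def power2_eq_square)
  then show ?thesis
    unfolding L2_field_def borel_measurable_euclidean_space[where f = w]
    using L2 by (auto simp: Basis_vec_def cart_eq_inner_axis)
qed

lemma AE_zero_if_nonneg_integrals_add_zero:
  fixes f g :: "'a \<Rightarrow> real"
  assumes "integrable M f" "integrable M g" "AE x in M. 0 \<le> f x" "AE x in M. 0 \<le> g x"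
    and "integral\<^sup>L M f + integral\<^sup>L M g = 0"
  shows "AE x in M. f x = 0 \<and> g x = 0"
proof -
  have "integral\<^sup>L M f = 0" "integral\<^sup>L M g = 0"
    using assms integral_nonneg_AE[of f M] integral_nonneg_AE[of g M] by linarith+
  then have "AE x in M. f x = 0" "AE x in M. g x = 0"
    using assms integral_nonneg_eq_0_iff_AE by blast+
  then show ?thesis by eventually_elim simp
qed

lemma integral_restrict_space_eq_0_iff_AE:
  fixes f :: "'a \<Rightarrow> real"
  assumes D: "D \<in> sets M" and f: "integrable M f" and nonneg: "AE x in M. 0 \<le> f x"
  shows "integral\<^sup>L (restrict_space M D) f = 0 \<longleftrightarrow> (AE x in M. x \<in> D \<longrightarrow> f x = 0)"
proof -
  have D_space: "D \<inter> space M \<in> sets M" using D by simp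
  have "integrable (restrict_space M D) f"
    using integrable_mult_indicator[OF D f] by (simp add: integrable_restrict_space[OF D_space])
  moreover have "AE x in restrict_space M D. 0 \<le> f x"
    using nonneg by (auto simp: AE_restrict_space_iff[OF D_space] elim: eventually_mono)
  ultimately show ?thesis
    by (simp add: integral_nonneg_eq_0_iff_AE AE_restrict_space_iff[OF D_space])
qed

lemma neumann_value_gap:
  assumes sol1: "weak_neumann_sol \<Omega> \<sigma>1 G u1 w1" and sol2: "weak_neumann_sol \<Omega> \<sigma>2 G u2 w2"
    and \<sigma>1: "ess_bounded (lebesgue_on \<Omega>) \<sigma>1" and \<sigma>2: "ess_bounded (lebesgue_on \<Omega>) \<sigma>2"
  shows "G u1 - G u2 =
    integral\<^sup>L (lebesgue_on \<Omega>) (\<lambda>x. \<sigma>1 x * (norm (w1 x - w2 x))\<^sup>2) +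
    integral\<^sup>L (lebesgue_on \<Omega>) (\<lambda>x. (\<sigma>2 x - \<sigma>1 x) * (norm (w2 x))\<^sup>2)"
proof -
  let ?M = "lebesgue_on \<Omega>"
  have grad1: "has_weak_gradient \<Omega> u1 w1" and grad2: "has_weak_gradient \<Omega> u2 w2"
    using sol1 sol2 unfolding weak_neumann_sol_def by auto
  have L2: "L2_field ?M w1" "L2_field ?M w2"
    using grad1 grad2 by (auto intro: has_weak_gradient_L2_field)
  have tested:
    "integral\<^sup>L ?M (\<lambda>x. \<sigma>1 x * (w1 x \<bullet> w1 x)) = G u1"
    "integral\<^sup>L ?M (\<lambda>x. \<sigma>1 x * (w1 x \<bullet> w2 x)) = G u2"
    "integral\<^sup>L ?M (\<lambda>x. \<sigma>2 x * (w2 x \<bullet> w2 x)) = G u2"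
    using sol1 sol2 grad1 grad2 unfolding weak_neumann_sol_def by auto
  have int:
    "integrable ?M (\<lambda>x. \<sigma>1 x * (w1 x \<bullet> w1 x))"
    "integrable ?M (\<lambda>x. \<sigma>1 x * (w1 x \<bullet> w2 x))"
    "integrable ?M (\<lambda>x. \<sigma>1 x * (w2 x \<bullet> w2 x))"
    "integrable ?M (\<lambda>x. \<sigma>2 x * (w2 x \<bullet> w2 x))"
    using L2 \<sigma>1 \<sigma>2 by (auto intro: integrable_weighted_inner)
  have pointwise:
    "\<sigma>1 x * (norm (w1 x - w2 x))\<^sup>2 =
       \<sigma>1 x * (w1 x \<bullet> w1 x) - 2 * (\<sigma>1 x * (w1 x \<bullet> w2 x)) + \<sigma>1 x * (w2 x \<bullet> w2 x)"
    "(\<sigma>2 x - \<sigma>1 x) * (norm (w2 x))\<^sup>2 = \<sigma>2 x * (w2 x \<bullet> w2 x) - \<sigma>1 x * (w2 x \<bullet> w2 x)" for x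
    unfolding power2_norm_eq_inner by (simp_all add: inner_diff inner_commute algebra_simps)
  show ?thesis
    unfolding pointwise using int tested by simp
qed

lemma grad_eq_if_neumann_values_eq:
  assumes sol1: "weak_neumann_sol \<Omega> \<sigma>1 G u1 w1" and sol2: "weak_neumann_sol \<Omega> \<sigma>2 G u2 w2"
    and \<sigma>1: "ess_bounded (lebesgue_on \<Omega>) \<sigma>1" and \<sigma>2: "ess_bounded (lebesgue_on \<Omega>) \<sigma>2"
    and ordered: "AE x in lebesgue_on \<Omega>. 0 < \<sigma>1 x \<and> \<sigma>1 x \<le> \<sigma>2 x"
    and "G u1 = G u2"
  shows "AE x in lebesgue_on \<Omega>. w1 x = w2 x \<and> (\<sigma>1 x < \<sigma>2 x \<longrightarrow> w2 x = 0)"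
proof -
  let ?M = "lebesgue_on \<Omega>"
  have L2: "L2_field ?M w1" "L2_field ?M w2"
    using sol1 sol2 unfolding weak_neumann_sol_def by (auto intro: has_weak_gradient_L2_field)
  have "AE x in ?M. \<sigma>1 x * (norm (w1 x - w2 x))\<^sup>2 = 0 \<and> (\<sigma>2 x - \<sigma>1 x) * (norm (w2 x))\<^sup>2 = 0"
  proof (rule AE_zero_if_nonneg_integrals_add_zero)
    show "integrable ?M (\<lambda>x. \<sigma>1 x * (norm (w1 x - w2 x))\<^sup>2)"
      using integrable_weighted_inner[OF L2_field_diff[OF L2] L2_field_diff[OF L2] \<sigma>1]
      by (simp add: power2_norm_eq_inner)
    show "integrable ?M (\<lambda>x. (\<sigma>2 x - \<sigma>1 x) * (norm (w2 x))\<^sup>2)"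
      using integrable_weighted_inner[OF L2(2) L2(2) ess_bounded_diff[OF \<sigma>2 \<sigma>1]]
      by (simp add: power2_norm_eq_inner)
    show "AE x in ?M. 0 \<le> \<sigma>1 x * (norm (w1 x - w2 x))\<^sup>2"
      "AE x in ?M. 0 \<le> (\<sigma>2 x - \<sigma>1 x) * (norm (w2 x))\<^sup>2"
      using ordered by (eventually_elim, simp)+
    show "integral\<^sup>L ?M (\<lambda>x. \<sigma>1 x * (norm (w1 x - w2 x))\<^sup>2) +
        integral\<^sup>L ?M (\<lambda>x. (\<sigma>2 x - \<sigma>1 x) * (norm (w2 x))\<^sup>2) = 0"
      using neumann_value_gap[OF sol1 sol2 \<sigma>1 \<sigma>2] \<open>G u1 = G u2\<close> by simp
  qed
  then show ?thesis using ordered by eventually_elim auto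
qed

lemma neumann_values_eq_if_weights_agree:
  assumes sol1: "weak_neumann_sol \<Omega> \<sigma>1 G u1 w1" and sol2: "weak_neumann_sol \<Omega> \<sigma>2 G u2 w2"
    and [measurable]: "\<sigma>1 \<in> borel_measurable (lebesgue_on \<Omega>)" "\<sigma>2 \<in> borel_measurable (lebesgue_on \<Omega>)"
    and agree: "AE x in lebesgue_on \<Omega>. w2 x \<noteq> 0 \<longrightarrow> \<sigma>1 x = \<sigma>2 x"
  shows "G u1 = G u2"
proof -
  let ?M = "lebesgue_on \<Omega>"
  have grad1: "has_weak_gradient \<Omega> u1 w1" and grad2: "has_weak_gradient \<Omega> u2 w2"
    using sol1 sol2 unfolding weak_neumann_sol_def by auto
  have [measurable]: "w1 \<in> borel_measurable ?M" "w2 \<in> borel_measurable ?M"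
    using grad1 grad2 by (auto dest: has_weak_gradient_L2_field simp: L2_field_def)
  have "G u2 = integral\<^sup>L ?M (\<lambda>x. \<sigma>1 x * (w1 x \<bullet> w2 x))"
    using sol1 grad2 unfolding weak_neumann_sol_def by auto
  also have "\<dots> = integral\<^sup>L ?M (\<lambda>x. \<sigma>2 x * (w2 x \<bullet> w1 x))"
    using agree by (intro integral_cong_AE) (auto elim!: eventually_mono simp: inner_commute)
  also have "\<dots> = G u1"
    using sol2 grad1 unfolding weak_neumann_sol_def by auto
  finally show ?thesis by simp
qed

lemma two_phase_neumann_values_eq_iff:
  assumes solD: "weak_neumann_sol \<Omega> (\<lambda>x. if x \<in> D then \<sigma>a x else \<sigma>bg x) G uD wD"
    and solbg: "weak_neumann_sol \<Omega> \<sigma>bg G ubg wbg"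
    and \<sigma>a: "ess_bounded (lebesgue_on \<Omega>) \<sigma>a" and \<sigma>bg: "ess_bounded (lebesgue_on \<Omega>) \<sigma>bg"
    and pos: "AE x in lebesgue_on \<Omega>. 0 < \<sigma>a x \<and> 0 < \<sigma>bg x"
    and D: "D \<in> sets (lebesgue_on \<Omega>)"
    and separated: "(AE x in lebesgue_on \<Omega>. \<sigma>a x < \<sigma>bg x) \<or> (AE x in lebesgue_on \<Omega>. \<sigma>bg x < \<sigma>a x)"
  shows "G uD = G ubg \<longleftrightarrow> (AE x in lebesgue_on \<Omega>. x \<in> D \<longrightarrow> wbg x = 0)"
proof
  define \<sigma>D where "\<sigma>D x = (if x \<in> D then \<sigma>a x else \<sigma>bg x)" for x
  have \<sigma>D: "ess_bounded (lebesgue_on \<Omega>) \<sigma>D"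
    unfolding \<sigma>D_def using \<sigma>a \<sigma>bg D by (rule ess_bounded_if)
  note solD = solD[folded \<sigma>D_def]
  assume eq: "G uD = G ubg"
  from separated show "AE x in lebesgue_on \<Omega>. x \<in> D \<longrightarrow> wbg x = 0"
  proof
    assume less: "AE x in lebesgue_on \<Omega>. \<sigma>a x < \<sigma>bg x"
    then have "AE x in lebesgue_on \<Omega>. 0 < \<sigma>D x \<and> \<sigma>D x \<le> \<sigma>bg x"
      using pos by eventually_elim (auto simp: \<sigma>D_def)
    from grad_eq_if_neumann_values_eq[OF solD solbg \<sigma>D \<sigma>bg this eq]
    show ?thesis using less by eventually_elim (auto simp: \<sigma>D_def)
  next
    assume less: "AE x in lebesgue_on \<Omega>. \<sigma>bg x < \<sigma>a x"
    then have "AE x in lebesgue_on \<Omega>. 0 < \<sigma>bg x \<and> \<sigma>bg x \<le> \<sigma>D x"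
      using pos by eventually_elim (auto simp: \<sigma>D_def)
    from grad_eq_if_neumann_values_eq[OF solbg solD \<sigma>bg \<sigma>D this eq[symmetric]]
    show ?thesis using less by eventually_elim (auto simp: \<sigma>D_def)
  qed
next
  assume "AE x in lebesgue_on \<Omega>. x \<in> D \<longrightarrow> wbg x = 0"
  then have "AE x in lebesgue_on \<Omega>. wbg x \<noteq> 0 \<longrightarrow> (if x \<in> D then \<sigma>a x else \<sigma>bg x) = \<sigma>bg x"
    by eventually_elim auto
  moreover have "(\<lambda>x. if x \<in> D then \<sigma>a x else \<sigma>bg x) \<in> borel_measurable (lebesgue_on \<Omega>)"
    using ess_bounded_if[OF \<sigma>a \<sigma>bg D] unfolding ess_bounded_def by blast
  ultimately show "G uD = G ubg"
    using \<sigma>bg unfolding ess_bounded_def by (blast intro: neumann_values_eq_if_weights_agree[OF solD solbg])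
qed

lemma weighted_energy_on_eq_0_iff:
  assumes "conductivity \<Omega> \<sigma>" and "has_weak_gradient \<Omega> u w"
    and \<Omega>: "\<Omega> \<in> sets lebesgue" and "D \<in> sets lebesgue" and "D \<subseteq> \<Omega>"
  shows "integral\<^sup>L (lebesgue_on D) (\<lambda>x. \<sigma> x * (norm (w x))\<^sup>2) = 0 \<longleftrightarrow>
    (AE x in lebesgue_on \<Omega>. x \<in> D \<longrightarrow> w x = 0)"
proof -
  let ?M = "lebesgue_on \<Omega>"
  have D: "D \<in> sets ?M"
    using assms by (simp add: sets_restrict_space_iff)
  have restrict_D: "lebesgue_on D = restrict_space ?M D"
    using restrict_restrict_space[of \<Omega> lebesgue D] assms by (simp add: Int_absorb1)
  obtain C where pos: "AE x in ?M. 0 < \<sigma> x \<and> \<sigma> x \<le> C"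
    using assms(1) by (rule conductivity_AE_bounds)
  have "integrable ?M (\<lambda>x. \<sigma> x * (norm (w x))\<^sup>2)"
    using integrable_weighted_inner[OF has_weak_gradient_L2_field has_weak_gradient_L2_field
        conductivity_ess_bounded] assms(1,2)
    by (simp add: power2_norm_eq_inner)
  moreover have "AE x in ?M. 0 \<le> \<sigma> x * (norm (w x))\<^sup>2"
    using pos by eventually_elim simp
  ultimately have "integral\<^sup>L (lebesgue_on D) (\<lambda>x. \<sigma> x * (norm (w x))\<^sup>2) = 0 \<longleftrightarrow>
      (AE x in ?M. x \<in> D \<longrightarrow> \<sigma> x * (norm (w x))\<^sup>2 = 0)"
    unfolding restrict_D using D by (simp add: integral_restrict_space_eq_0_iff_AE)
  also have "\<dots> \<longleftrightarrow> (AE x in ?M. x \<in> D \<longrightarrow> w x = 0)"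
    by (rule eventually_cong[OF pos]) auto
  finally show ?thesis .
qed

theorem lemma3p1:
  fixes \<Omega> D :: "(real^'n) set"
    and \<sigma>bg \<sigma>a :: "real^'n \<Rightarrow> real"
    and G :: "(real^'n \<Rightarrow> real) \<Rightarrow> real"
    and uD ubg :: "real^'n \<Rightarrow> real"
    and wD wbg :: "real^'n \<Rightarrow> real^'n"
  assumes "CARD('n) \<ge> 2"
    and "open \<Omega>" and "connected \<Omega>" and "bounded \<Omega>" and "simply_connected \<Omega>"
    and "smooth_boundary \<Omega>"
    and "conductivity \<Omega> \<sigma>bg" and "conductivity \<Omega> \<sigma>a"
    and "D \<in> sets lebesgue" and "D \<subseteq> \<Omega>"
    and "\<exists>\<D>. \<Union>\<D> = D \<and> (\<forall>C\<in>\<D>. connected C) \<and> pairwise disjnt \<D>"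
    and "ess_sup_on \<Omega> \<sigma>a < ess_inf_on \<Omega> \<sigma>bg \<or> ess_inf_on \<Omega> \<sigma>a > ess_sup_on \<Omega> \<sigma>bg"
    and "neumann_datum \<Omega> G"
    and "weak_neumann_sol \<Omega> (\<lambda>x. if x \<in> D then \<sigma>a x else \<sigma>bg x) G uD wD"
    and "weak_neumann_sol \<Omega> \<sigma>bg G ubg wbg"
  shows "G uD - G ubg = 0 \<longleftrightarrow>
         integral\<^sup>L (lebesgue_on D) (\<lambda>x. \<sigma>bg x * (norm (wbg x))^2) = 0"
proof -
  let ?M = "lebesgue_on \<Omega>"
  have \<Omega>: "\<Omega> \<in> sets lebesgue"
    using \<open>open \<Omega>\<close> by (simp add: borel_open sets_completionI_sets)
  then have D: "D \<in> sets ?M"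
    using \<open>D \<in> sets lebesgue\<close> \<open>D \<subseteq> \<Omega>\<close> by (simp add: sets_restrict_space_iff)
  obtain Cbg where "AE x in ?M. 0 < \<sigma>bg x \<and> \<sigma>bg x \<le> Cbg"
    using assms(7) by (rule conductivity_AE_bounds)
  moreover obtain Ca where "AE x in ?M. 0 < \<sigma>a x \<and> \<sigma>a x \<le> Ca"
    using assms(8) by (rule conductivity_AE_bounds)
  ultimately have pos: "AE x in ?M. 0 < \<sigma>a x \<and> 0 < \<sigma>bg x"
    by eventually_elim simp
  have separated: "(AE x in ?M. \<sigma>a x < \<sigma>bg x) \<or> (AE x in ?M. \<sigma>bg x < \<sigma>a x)"
    using assms(12) AE_less_if_ess_sup_less_ess_inf by blast
  have "G uD - G ubg = 0 \<longleftrightarrow> (AE x in ?M. x \<in> D \<longrightarrow> wbg x = 0)"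
    using two_phase_neumann_values_eq_iff[OF assms(14,15) conductivity_ess_bounded[OF assms(8)]
        conductivity_ess_bounded[OF assms(7)] pos D separated]
    by simp
  also have "\<dots> \<longleftrightarrow> integral\<^sup>L (lebesgue_on D) (\<lambda>x. \<sigma>bg x * (norm (wbg x))\<^sup>2) = 0"
    using weighted_energy_on_eq_0_iff[OF assms(7) _ \<Omega> assms(9,10)] assms(15)
    unfolding weak_neumann_sol_def by blast
  finally show ?thesis .
qed

end
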